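(* Let $\rho_n=6-4\big(1+\frac1n\big)^{3/2}-4\big(1-\frac1n\big)^{3/2}+\big(1+\frac2n\big)^{3/2}+\big(1-\frac2n\big)^{3/2}$ for $n\ge2$. For every finitely supported complex sequence $\{A_n\}_{n\ge0}$ with $A_0=A_1=0$, not identically zero, and with the convention $A_{-1}=0$, $$\sum_{n=1}^\infty|A_n-2A_{n-1}+A_{n-2}|^2\ \ge\ \sum_{n=2}^\infty\rho_n|A_n|^2\ >\ \frac{9}{16}\sum_{n=2}^\infty\frac{|A_n|^2}{n^4}\ \ge\ \frac{9}{16}\sum_{n=1}^\infty\frac{|A_n|^2}{n^2(n+1)^2}.$$
   Context: $\rho_n=((-\Delta)^2 n^{3/2})/n^{3/2}$ is the improved Rellich weight of Gerhat–Krejčiřík–Štampach, where $(-\Delta)$ is the discrete Dirichlet Laplacian $((-\Delta)A)_n=2A_n-A_{n-1}-A_{n+1}$. The left side is $\sum_n|(\nabla^2A)_n|^2$ with $\nabla$ the backward difference; this is the inequality form used to relate the order-2 Knopp inequality to the Rellich inequality. *)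

theory Defs
  imports "HOL-Analysis.Analysis"
begin

definition rho :: "nat \<Rightarrow> real" where
  "rho n = 6 - 4 * (1 + 1 / real n) powr (3/2) - 4 * (1 - 1 / real n) powr (3/2)
             + (1 + 2 / real n) powr (3/2) + (1 - 2 / real n) powr (3/2)"

definition ext_seq :: "(nat \<Rightarrow> complex) \<Rightarrow> int \<Rightarrow> complex" where
  "ext_seq A k = (if k < 0 then 0 else A (nat k))"

definition second_diff :: "(nat \<Rightarrow> complex) \<Rightarrow> nat \<Rightarrow> complex" where
  "second_diff A n = ext_seq A (int n) - 2 * ext_seq A (int n - 1) + ext_seq A (int n - 2)"

end

theory Submission
  imports Defs
begin

text \<open>
  Write g(n) = n^(3/2) and G = \<nabla>g. For h > 0 the ground state representation yields the
  weighted Hardy inequality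
    \<Sum> c(k) |v(k) - v(k-1)|^2 \<ge> \<Sum> (c(k) (1 - h(k-1)/h(k)) + c(k+1) (1 - h(k+1)/h(k))) |v(k)|^2.
  Applying it to v = \<nabla>A with c = 1, h = G, and then to v = A with h = g and c the weight just
  obtained (nonnegative because G is concave) factorizes the Rellich inequality; the composite
  weight is (\<Delta>^2 g)/g = \<rho>.

  The bound \<rho>(n) > 9/(16 n^4) is Taylor's theorem for the fourth central difference of x^(3/2)
  at x = 1 with step t = 1/n: its derivatives of order < 4 vanish at t = 0, and its fourth
  derivative exceeds 27/2 on (0, 1/2) by convexity of y^(-5/2) and AM-GM. At n = 2 the step
  t = 1/2 reaches the singularity, and that case is checked numerically.
\<close>

text \<open>Truncated subtraction makes \<^term>\<open>bdiff u 0 = 0\<close>; for sequences with u 0 = 0 this is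
  the convention u(-1) = 0.\<close>

definition bdiff :: "(nat \<Rightarrow> 'a::ab_group_add) \<Rightarrow> nat \<Rightarrow> 'a" where
  "bdiff u k = u k - u (k - 1)"

text \<open>For h > 0 this is (c(k) \<nabla>h(k) - c(k+1) \<nabla>h(k+1)) / h(k), the Hardy weight generated by the
  ground state h.\<close>

definition hardy_weight :: "(nat \<Rightarrow> real) \<Rightarrow> (nat \<Rightarrow> real) \<Rightarrow> nat \<Rightarrow> real" where
  "hardy_weight c h k = c k * (1 - h (k - 1) / h k) + c (Suc k) * (1 - h (Suc k) / h k)"

lemma norm_diff_power2_ge_ground_state:
  fixes a b :: "'a::real_inner"
  assumes "0 < h" "0 < h'"
  shows "(1 - h' / h) * (norm a)\<^sup>2 + (1 - h / h') * (norm b)\<^sup>2 \<le> (norm (a - b))\<^sup>2"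
proof -
  have "0 \<le> h * h' * (norm (a /\<^sub>R h - b /\<^sub>R h'))\<^sup>2"
    using assms by simp
  also have "\<dots> = (norm (a - b))\<^sup>2 - (1 - h' / h) * (norm a)\<^sup>2 - (1 - h / h') * (norm b)\<^sup>2"
    using assms
    by (simp add: power2_norm_eq_inner inner_diff_left inner_diff_right inner_commute field_simps)
  finally show ?thesis by simp
qed

lemma hardy_inequality_ground_state:
  fixes v :: "nat \<Rightarrow> 'a::real_inner" and c h :: "nat \<Rightarrow> real"
  assumes "v 0 = 0" "v M = 0" "0 \<le> h 0"
    and h_pos: "\<And>k. 1 \<le> k \<Longrightarrow> 0 < h k" and c_nonneg: "\<And>k. 1 \<le> k \<Longrightarrow> 0 \<le> c k"
  shows "(\<Sum>k=1..M. hardy_weight c h k * (norm (v k))\<^sup>2) \<le> (\<Sum>k=1..M. c k * (norm (bdiff v k))\<^sup>2)"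
proof -
  define F where "F k = c (Suc k) * (1 - h (Suc k) / h k) * (norm (v k))\<^sup>2" for k
  have pointwise: "c k * (1 - h (k - 1) / h k) * (norm (v k))\<^sup>2 + F (k - 1) \<le> c k * (norm (bdiff v k))\<^sup>2"
    if "k \<in> {1..M}" for k
  proof (cases "k = 1")
    case True
    have "0 \<le> h 0 / h 1"
      using assms(3) h_pos[of 1] by (intro divide_nonneg_pos) auto
    then have "c 1 * (1 - h 0 / h 1) \<le> c 1"
      using mult_left_mono[of "1 - h 0 / h 1" 1 "c 1"] c_nonneg[of 1] by simp
    then have "c 1 * (1 - h 0 / h 1) * (norm (v 1))\<^sup>2 \<le> c 1 * (norm (v 1))\<^sup>2"
      by (rule mult_right_mono) simp
    then show ?thesis
      using True assms by (simp add: F_def bdiff_def)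
  next
    case False
    then have "1 \<le> k - 1" "Suc (k - 1) = k"
      using that by auto
    then show ?thesis
      using mult_left_mono[OF norm_diff_power2_ge_ground_state[of "h k" "h (k - 1)" "v k" "v (k - 1)"]]
        h_pos c_nonneg that
      by (simp add: F_def bdiff_def algebra_simps)
  qed
  \<comment> \<open>The b-parts F (k - 1) of the pointwise bounds reindex to the c (k + 1)-parts of the
    weight, because F 0 = F M = 0.\<close>
  have "(\<Sum>k=1..M. F (k - 1)) + F M = F 0 + (\<Sum>k=1..M. F k)"
    by (induction M) auto
  then have shift: "(\<Sum>k=1..M. F k) = (\<Sum>k=1..M. F (k - 1))"
    using assms by (simp add: F_def)
  have "(\<Sum>k=1..M. hardy_weight c h k * (norm (v k))\<^sup>2)
      = (\<Sum>k=1..M. c k * (1 - h (k - 1) / h k) * (norm (v k))\<^sup>2) + (\<Sum>k=1..M. F k)"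
    by (simp add: sum.distrib[symmetric] hardy_weight_def F_def algebra_simps)
  also have "\<dots> = (\<Sum>k=1..M. c k * (1 - h (k - 1) / h k) * (norm (v k))\<^sup>2 + F (k - 1))"
    by (simp only: shift sum.distrib)
  also have "\<dots> \<le> (\<Sum>k=1..M. c k * (norm (bdiff v k))\<^sup>2)"
    by (rule sum_mono) (rule pointwise)
  finally show ?thesis .
qed

lemma hardy_weight_of_hardy_weight:
  fixes g :: "nat \<Rightarrow> real"
  assumes "2 \<le> k" "g k \<noteq> 0" "bdiff g k \<noteq> 0" "bdiff g (Suc k) \<noteq> 0"
  shows "hardy_weight (hardy_weight (\<lambda>_. 1) (bdiff g)) g k
    = (g (k - 2) - 4 * g (k - 1) + 6 * g k - 4 * g (k + 1) + g (k + 2)) / g k"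
proof -
  define G where "G = bdiff g"
  define c where "c = hardy_weight (\<lambda>_. 1) G"
  have c_times_G: "c j * G j = 2 * G j - G (j - 1) - G (Suc j)" if "G j \<noteq> 0" for j
    using that by (simp add: c_def hardy_weight_def algebra_simps)
  have G_nonzero: "G k \<noteq> 0" "G (Suc k) \<noteq> 0"
    using assms by (simp_all add: G_def)
  have "1 - g (k - 1) / g k = G k / g k" "1 - g (Suc k) / g k = - G (Suc k) / g k"
    using assms by (simp_all add: G_def bdiff_def diff_divide_distrib)
  then have "hardy_weight c g k = (c k * G k - c (Suc k) * G (Suc k)) / g k"
    by (simp add: hardy_weight_def diff_divide_distrib)
  also have "\<dots> = ((2 * G k - G (k - 1) - G (Suc k)) - (2 * G (Suc k) - G k - G (Suc (Suc k)))) / g k"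
    using G_nonzero by (simp add: c_times_G)
  also have "\<dots> = (g (k - 2) - 4 * g (k - 1) + 6 * g k - 4 * g (k + 1) + g (k + 2)) / g k"
    using assms by (simp add: G_def bdiff_def numeral_eq_Suc Suc_diff_Suc algebra_simps)
  finally show ?thesis
    by (simp add: G_def c_def)
qed

lemma powr_three_halves: "0 \<le> x \<Longrightarrow> (x::real) powr (3/2) = x * sqrt x"
  using powr_add[of x 1 "1/2"] by (cases "x = 0") (simp_all add: powr_half_sqrt)

definition ground_state :: "nat \<Rightarrow> real" where
  "ground_state k = real k powr (3/2)"

lemma bdiff_ground_state_pos: "1 \<le> k \<Longrightarrow> 0 < bdiff ground_state k"
  by (simp add: bdiff_def ground_state_def powr_less_mono2)

lemma convex_on_powr_three_halves_decrement:
  "convex_on {1<..} (\<lambda>y::real. (y - 1) powr (3/2) - y powr (3/2))"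
proof (rule f''_ge0_imp_convex)
  fix y :: real assume "y \<in> {1<..}"
  then have y: "0 < y - 1" "0 < y" by auto
  then show "((\<lambda>y. (y - 1) powr (3/2) - y powr (3/2)) has_real_derivative
      3/2 * (y - 1) powr (1/2) - 3/2 * y powr (1/2)) (at y)"
    by (auto intro!: derivative_eq_intros)
  show "((\<lambda>y. 3/2 * (y - 1) powr (1/2) - 3/2 * y powr (1/2)) has_real_derivative
      3/4 * (y - 1) powr (-1/2) - 3/4 * y powr (-1/2)) (at y)"
    using y by (auto intro!: derivative_eq_intros)
  show "0 \<le> 3/4 * (y - 1) powr (-1/2) - 3/4 * y powr (-1/2)"
    using y powr_less_mono2_neg[of "-1/2" "y - 1" y] by simp
qed simp

lemma bdiff_ground_state_concave:
  assumes "1 \<le> k"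
  shows "bdiff ground_state (k - 1) + bdiff ground_state (Suc k) \<le> 2 * bdiff ground_state k"
proof -
  have sqrt2: "1.414 < sqrt 2" "sqrt 2 < 1.5"
    by (rule real_less_rsqrt real_less_lsqrt; simp add: power2_eq_square)+
  have sqrt3: "sqrt 3 < 1.7321"
    by (rule real_less_lsqrt) (simp_all add: power2_eq_square)
  \<comment> \<open>The convexity argument needs k - 1 > 1, so k \<le> 2 is checked numerically.\<close>
  consider "k = 1" | "k = 2" | "3 \<le> k"
    using assms by linarith
  then show ?thesis
  proof cases
    case 1
    then show ?thesis
      using sqrt2 by (simp add: bdiff_def ground_state_def powr_three_halves)
  next
    case 2
    then show ?thesis
      using sqrt2 sqrt3 by (simp add: bdiff_def ground_state_def powr_three_halves numeral_eq_Suc)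
  next
    case 3
    define \<psi> where "\<psi> y = (y - 1) powr (3/2) - y powr (3/2)" for y :: real
    have midpoint: "(1 - 1/2) *\<^sub>R (real k - 1) + (1/2) *\<^sub>R (real k + 1) = real k"
      by (simp add: field_simps)
    have "\<psi> (real k) \<le> (1 - 1/2) * \<psi> (real k - 1) + (1/2) * \<psi> (real k + 1)"
      using 3 convex_onD[OF convex_on_powr_three_halves_decrement[folded \<psi>_def],
          of "1/2" "real k - 1" "real k + 1"]
      unfolding midpoint by auto
    moreover have "bdiff ground_state j = - \<psi> (real j)" if "1 \<le> j" for j
      using that by (simp add: \<psi>_def bdiff_def ground_state_def of_nat_diff)
    ultimately show ?thesis
      using 3 by (simp add: of_nat_diff algebra_simps)
  qed
qed

lemma rho_eq_hardy_weight:
  assumes "2 \<le> k"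
  shows "rho k = hardy_weight (hardy_weight (\<lambda>_. 1) (bdiff ground_state)) ground_state k"
proof -
  let ?g = ground_state
  have g_pos: "0 < ?g k"
    using assms by (simp add: ground_state_def)
  have "1 + 1 / real k = real (k + 1) / real k" "1 - 1 / real k = real (k - 1) / real k"
      "1 + 2 / real k = real (k + 2) / real k" "1 - 2 / real k = real (k - 2) / real k"
    using assms by (auto simp: field_simps of_nat_diff)
  then have "rho k = 6 - 4 * (?g (k + 1) / ?g k) - 4 * (?g (k - 1) / ?g k)
      + ?g (k + 2) / ?g k + ?g (k - 2) / ?g k"
    by (simp add: rho_def ground_state_def powr_divide)
  also have "\<dots> = (?g (k - 2) - 4 * ?g (k - 1) + 6 * ?g k - 4 * ?g (k + 1) + ?g (k + 2)) / ?g k"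
    using g_pos by (simp add: field_simps)
  also have "\<dots> = hardy_weight (hardy_weight (\<lambda>_. 1) (bdiff ?g)) ?g k"
    using assms g_pos bdiff_ground_state_pos[of k] bdiff_ground_state_pos[of "Suc k"]
    by (intro hardy_weight_of_hardy_weight[symmetric]) auto
  finally show ?thesis .
qed

lemma rellich_inequality:
  fixes u :: "nat \<Rightarrow> 'a::real_inner"
  assumes "u 0 = 0" "u 1 = 0" and vanish: "\<And>k. N \<le> k \<Longrightarrow> u k = 0"
  shows "(\<Sum>k=2..Suc N. rho k * (norm (u k))\<^sup>2) \<le> (\<Sum>k=2..Suc N. (norm (bdiff (bdiff u) k))\<^sup>2)"
proof -
  define G where "G = bdiff ground_state"
  define c where "c = hardy_weight (\<lambda>_. 1) G"
  have G_pos: "0 < G k" if "1 \<le> k" for k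
    using bdiff_ground_state_pos that by (simp add: G_def)
  have c_nonneg: "0 \<le> c k" if "1 \<le> k" for k
  proof -
    have "0 \<le> (2 * G k - G (k - 1) - G (Suc k)) / G k"
      using bdiff_ground_state_concave[OF that] G_pos[OF that] by (simp add: G_def)
    also have "\<dots> = c k"
      using G_pos[OF that] by (simp add: c_def hardy_weight_def field_simps)
    finally show ?thesis .
  qed
  have "(\<Sum>k=1..Suc N. hardy_weight c ground_state k * (norm (u k))\<^sup>2)
      \<le> (\<Sum>k=1..Suc N. c k * (norm (bdiff u k))\<^sup>2)"
    using assms c_nonneg
    by (intro hardy_inequality_ground_state) (auto simp: ground_state_def)
  also have "\<dots> \<le> (\<Sum>k=1..Suc N. 1 * (norm (bdiff (bdiff u) k))\<^sup>2)"
    unfolding c_def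
    using assms G_pos
    by (intro hardy_inequality_ground_state) (auto simp: bdiff_def G_def)
  finally have "(\<Sum>k=1..Suc N. hardy_weight c ground_state k * (norm (u k))\<^sup>2)
      \<le> (\<Sum>k=1..Suc N. (norm (bdiff (bdiff u) k))\<^sup>2)"
    by simp
  moreover have "(\<Sum>k=1..Suc N. hardy_weight c ground_state k * (norm (u k))\<^sup>2)
      = (\<Sum>k=2..Suc N. rho k * (norm (u k))\<^sup>2)"
    using assms by (simp add: sum.atLeast_Suc_atMost numeral_2_eq_2 rho_eq_hardy_weight c_def G_def)
  moreover have "(\<Sum>k=1..Suc N. (norm (bdiff (bdiff u) k))\<^sup>2)
      = (\<Sum>k=2..Suc N. (norm (bdiff (bdiff u) k))\<^sup>2)"
    using assms by (simp add: sum.atLeast_Suc_atMost numeral_2_eq_2 bdiff_def)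
  ultimately show ?thesis
    by simp
qed

lemma powr_convex_nonpos:
  assumes "p \<le> 0" shows "convex_on {0<..} (\<lambda>x::real. x powr p)"
proof (rule f''_ge0_imp_convex)
  fix x :: real assume "x \<in> {0<..}"
  then show "((\<lambda>x. x powr p) has_real_derivative p * x powr (p - 1)) (at x)"
    and "((\<lambda>x. p * x powr (p - 1)) has_real_derivative p * ((p - 1) * x powr (p - 1 - 1))) (at x)"
    by (auto intro!: derivative_eq_intros)
  show "0 \<le> p * ((p - 1) * x powr (p - 1 - 1))"
    using assms by (intro mult_nonpos_nonpos mult_nonpos_nonneg) auto
qed simp

definition shifted_powr_deriv :: "real \<Rightarrow> real \<Rightarrow> nat \<Rightarrow> real \<Rightarrow> real" where
  "shifted_powr_deriv a j m t = (\<Prod>i<m. a - real i) * j ^ m * (1 + j * t) powr (a - real m)"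

lemma has_real_derivative_shifted_powr_deriv:
  assumes "0 < 1 + j * t"
  shows "(shifted_powr_deriv a j m has_real_derivative shifted_powr_deriv a j (Suc m) t) (at t)"
proof -
  have "((\<lambda>t. (1 + j * t) powr (a - real m)) has_real_derivative
      (a - real m) * (1 + j * t) powr (a - real (Suc m)) * j) (at t)"
    using assms by (auto intro!: derivative_eq_intros simp: algebra_simps)
  then show ?thesis
    unfolding shifted_powr_deriv_def[abs_def]
    by (auto intro!: DERIV_cmult[THEN DERIV_cong] simp: algebra_simps)
qed

text \<open>The m-th derivative in t of the fourth central difference
  (1-2t)^(3/2) - 4(1-t)^(3/2) + 6 - 4(1+t)^(3/2) + (1+2t)^(3/2) of x^(3/2) at x = 1,
  which equals \<^term>\<open>rho n\<close> at t = 1/n.\<close>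

definition rho_profile_deriv :: "nat \<Rightarrow> real \<Rightarrow> real" where
  "rho_profile_deriv m t =
     shifted_powr_deriv (3/2) (-2) m t - 4 * shifted_powr_deriv (3/2) (-1) m t
     + 6 * shifted_powr_deriv (3/2) 0 m t
     - 4 * shifted_powr_deriv (3/2) 1 m t + shifted_powr_deriv (3/2) 2 m t"

lemma rho_eq_rho_profile_deriv: "rho n = rho_profile_deriv 0 (1 / real n)"
  unfolding rho_def rho_profile_deriv_def shifted_powr_deriv_def by (simp add: algebra_simps)

lemma rho_profile_deriv_has_derivative:
  assumes "\<bar>t\<bar> < 1/2"
  shows "(rho_profile_deriv m has_real_derivative rho_profile_deriv (Suc m) t) (at t)"
  unfolding rho_profile_deriv_def[abs_def]
  using assms
  by (intro DERIV_add DERIV_diff DERIV_cmult has_real_derivative_shifted_powr_deriv) auto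

lemma rho_profile_deriv_at_zero: "m < 4 \<Longrightarrow> rho_profile_deriv m 0 = 0"
proof -
  assume "m < 4"
  then consider "m = 0" | "m = 1" | "m = 2" | "m = 3" by linarith
  then show ?thesis
    by cases (simp_all add: rho_profile_deriv_def shifted_powr_deriv_def numeral_eq_Suc lessThan_Suc)
qed

lemma rho_profile_deriv_4_gt:
  assumes "0 < t" "t < 1/2"
  shows "27/2 < rho_profile_deriv 4 t"
proof -
  define \<phi> where "\<phi> y = y powr (-5/2)" for y :: real
  have deriv4: "rho_profile_deriv 4 t
      = 9/16 * (16 * \<phi> (1 - 2 * t) - 4 * \<phi> (1 - t) - 4 * \<phi> (1 + t) + 16 * \<phi> (1 + 2 * t))"
    by (simp add: rho_profile_deriv_def shifted_powr_deriv_def \<phi>_def numeral_eq_Suc lessThan_Suc)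
  have midpoint: "\<phi> (1 + s) \<le> (\<phi> (1 + 2 * s) + 1) / 2" if "\<bar>s\<bar> < 1/2" for s
  proof -
    have "0 < 1 + 2 * s" using that by linarith
    then show ?thesis
      using convex_onD[OF powr_convex_nonpos, of "-5/2" "1/2" 1 "1 + 2 * s"]
      by (simp add: \<phi>_def algebra_simps)
  qed
  have "4 * t^2 < 1"
    using mult_strict_mono[of "2 * t" 1 "2 * t" 1] assms by (simp add: power2_eq_square)
  then have "1 < (1 - 4 * t^2) powr (-5/2)"
    using assms by (intro powr_less_mono2_neg[of _ _ 1, simplified]) auto
  also have "\<dots> = \<phi> (1 + 2 * t) * \<phi> (1 - 2 * t)"
    using assms by (simp add: \<phi>_def powr_mult[symmetric] algebra_simps power2_eq_square)
  finally have "2^2 < (\<phi> (1 + 2 * t) + \<phi> (1 - 2 * t))^2"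
    using sum_squares_ge_zero[of "\<phi> (1 + 2 * t) - \<phi> (1 - 2 * t)" 0]
    by (simp add: power2_eq_square algebra_simps)
  then have "2 < \<phi> (1 + 2 * t) + \<phi> (1 - 2 * t)"
    by (rule power2_less_imp_less) (simp add: \<phi>_def)
  with deriv4 midpoint[of t] midpoint[of "-t"] assms show ?thesis
    by simp
qed

lemma rho_gt_of_ge_3:
  assumes "3 \<le> n"
  shows "9/16 / real n ^ 4 < rho n"
proof -
  define x where "x = 1 / real n"
  have x: "0 < x" "x < 1/2"
    using assms by (auto simp: x_def field_simps)
  obtain t where t: "0 < t" "t < x" and taylor: "rho_profile_deriv 0 x =
      (\<Sum>m<4. rho_profile_deriv m 0 / fact m * x ^ m) + rho_profile_deriv 4 t / fact 4 * x ^ 4"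
    using Maclaurin[OF x(1), of 4 rho_profile_deriv] x rho_profile_deriv_has_derivative
    by auto
  have "9/16 / real n ^ 4 = 27/2 / fact 4 * x ^ 4"
    by (simp add: x_def power_one_over fact_numeral)
  also have "\<dots> < rho_profile_deriv 4 t / fact 4 * x ^ 4"
    using rho_profile_deriv_4_gt[of t] t x by (intro mult_strict_right_mono divide_strict_right_mono) auto
  also have "\<dots> = rho n"
    by (simp add: taylor rho_eq_rho_profile_deriv x_def[symmetric] rho_profile_deriv_at_zero)
  finally show ?thesis .
qed

lemma rho_2_gt: "9/16 / real 2 ^ 4 < rho 2"
proof -
  have sqrt_half: "sqrt (1/2) = sqrt 2 / 2"
    by (simp add: real_sqrt_divide field_simps)
  have "rho 2 = 6 - 6 * sqrt (3/2) + sqrt 2"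
    by (simp add: rho_def powr_three_halves sqrt_half)
  moreover have "sqrt (3/2) < 1.2248"
    by (rule real_less_lsqrt) (auto simp: power2_eq_square)
  moreover have "1.414 < sqrt 2"
    by (rule real_less_rsqrt) (auto simp: power2_eq_square)
  ultimately show ?thesis by simp
qed

lemma rho_gt: "2 \<le> n \<Longrightarrow> 9/16 / real n ^ 4 < rho n"
  using rho_2_gt rho_gt_of_ge_3 by (cases "n = 2") auto

lemma rho_weighted_sum_gt:
  fixes A :: "nat \<Rightarrow> 'a::real_normed_vector"
  assumes "finite S" "S \<subseteq> {2..}" "n0 \<in> S" "A n0 \<noteq> 0"
  shows "9/16 * (\<Sum>n\<in>S. (norm (A n))\<^sup>2 / real n ^ 4) < (\<Sum>n\<in>S. rho n * (norm (A n))\<^sup>2)"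
proof -
  have "9/16 * (\<Sum>n\<in>S. (norm (A n))\<^sup>2 / real n ^ 4) = (\<Sum>n\<in>S. 9/16 / real n ^ 4 * (norm (A n))\<^sup>2)"
    by (simp add: sum_distrib_left)
  also have "\<dots> < (\<Sum>n\<in>S. rho n * (norm (A n))\<^sup>2)"
  proof (rule sum_strict_mono_ex1)
    show "\<forall>n\<in>S. 9/16 / real n ^ 4 * (norm (A n))\<^sup>2 \<le> rho n * (norm (A n))\<^sup>2"
      using assms(2) by (intro ballI mult_right_mono less_imp_le[OF rho_gt]) auto
    show "\<exists>n\<in>S. 9/16 / real n ^ 4 * (norm (A n))\<^sup>2 < rho n * (norm (A n))\<^sup>2"
      using assms by (intro bexI[of _ n0] mult_strict_right_mono rho_gt) auto
  qed (fact assms(1))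
  finally show ?thesis .
qed

lemma second_diff_eq_bdiff_bdiff:
  assumes "A 0 = 0"
  shows "second_diff A = bdiff (bdiff A)"
proof
  fix n
  show "second_diff A n = bdiff (bdiff A) n"
    using assms by (cases "n \<le> 1")
      (auto simp: second_diff_def ext_seq_def bdiff_def le_Suc_eq nat_diff_distrib numeral_2_eq_2)
qed

theorem proposition5p1:
  fixes A :: "nat \<Rightarrow> complex"
  assumes "finite {n. A n \<noteq> 0}"
    and "A 0 = 0" and "A 1 = 0"
    and "\<exists>n. A n \<noteq> 0"
  shows "(\<Sum>\<^sub>\<infinity>n\<in>{1..}. (cmod (second_diff A n))\<^sup>2)
           \<ge> (\<Sum>\<^sub>\<infinity>n\<in>{2..}. rho n * (cmod (A n))\<^sup>2)
       \<and> (\<Sum>\<^sub>\<infinity>n\<in>{2..}. rho n * (cmod (A n))\<^sup>2)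
           > 9/16 * (\<Sum>\<^sub>\<infinity>n\<in>{2..}. (cmod (A n))\<^sup>2 / real n ^ 4)
       \<and> 9/16 * (\<Sum>\<^sub>\<infinity>n\<in>{2..}. (cmod (A n))\<^sup>2 / real n ^ 4)
           \<ge> 9/16 * (\<Sum>\<^sub>\<infinity>n\<in>{1..}. (cmod (A n))\<^sup>2 / (real n ^ 2 * real (n + 1) ^ 2))"
proof -
  obtain N where vanish: "\<And>k. N \<le> k \<Longrightarrow> A k = 0"
    using finite_nat_bounded[OF assms(1)] by (auto simp: subset_eq not_le[symmetric])
  have A_outside: "A k = 0" if "k \<le> 1 \<or> N \<le> k" for k
    using that assms(2,3) vanish by (auto simp: le_Suc_eq)
  define S where "S = {2..Suc N}"
  obtain n0 where n0: "A n0 \<noteq> 0"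
    using assms(4) by blast
  then have "n0 \<in> S"
    using A_outside[of n0] by (cases "n0 \<le> 1 \<or> N \<le> n0") (auto simp: S_def)
  have infsum_eq_sum: "infsum f T = sum f S"
    if "S \<subseteq> T" "\<And>k. k \<in> T - S \<Longrightarrow> f k = 0" for f :: "nat \<Rightarrow> real" and T
    using that by (intro infsumI has_sum_finite_neutralI) (auto simp: S_def)
  have "(\<Sum>\<^sub>\<infinity>n\<in>{1..}. (cmod (second_diff A n))\<^sup>2) = (\<Sum>n\<in>S. (cmod (bdiff (bdiff A) n))\<^sup>2)"
    unfolding second_diff_eq_bdiff_bdiff[of A, OF assms(2)]
    by (intro infsum_eq_sum) (auto simp: S_def bdiff_def A_outside vanish)
  moreover have "(\<Sum>\<^sub>\<infinity>n\<in>{2..}. rho n * (cmod (A n))\<^sup>2) = (\<Sum>n\<in>S. rho n * (cmod (A n))\<^sup>2)"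
    and "(\<Sum>\<^sub>\<infinity>n\<in>{2..}. (cmod (A n))\<^sup>2 / real n ^ 4) = (\<Sum>n\<in>S. (cmod (A n))\<^sup>2 / real n ^ 4)"
    and "(\<Sum>\<^sub>\<infinity>n\<in>{1..}. (cmod (A n))\<^sup>2 / (real n ^ 2 * real (n + 1) ^ 2))
      = (\<Sum>n\<in>S. (cmod (A n))\<^sup>2 / (real n ^ 2 * real (n + 1) ^ 2))"
    by (intro infsum_eq_sum; auto simp: S_def A_outside vanish)+
  moreover have "(\<Sum>n\<in>S. rho n * (cmod (A n))\<^sup>2) \<le> (\<Sum>n\<in>S. (cmod (bdiff (bdiff A) n))\<^sup>2)"
    unfolding S_def using assms(2,3) vanish by (rule rellich_inequality)
  moreover have "9/16 * (\<Sum>n\<in>S. (cmod (A n))\<^sup>2 / real n ^ 4) < (\<Sum>n\<in>S. rho n * (cmod (A n))\<^sup>2)"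
    using n0 \<open>n0 \<in> S\<close> by (intro rho_weighted_sum_gt) (auto simp: S_def)
  moreover have "(\<Sum>n\<in>S. (cmod (A n))\<^sup>2 / (real n ^ 2 * real (n + 1) ^ 2))
      \<le> (\<Sum>n\<in>S. (cmod (A n))\<^sup>2 / real n ^ 4)"
    by (intro sum_mono divide_left_mono)
      (auto simp: S_def power4_eq_xxxx power2_eq_square intro!: mult_mono)
  ultimately show ?thesis
    by simp
qed

end
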